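(* Every proper sequence in a semigroup has a sumsequence $b_1,b_2,\dotsc$ such that $b_F\ne b_G$ for all disjoint nonempty finite index sets $F,G\subseteq\mathbb N$.
   Context: Semigroups are written additively and are not assumed commutative. For a sequence $a_1,a_2,\dotsc$ and a finite nonempty index set $F=\{i_1<\dotsb<i_m\}$, $a_F:=a_{i_1}+\dotsb+a_{i_m}$ (summed in increasing order of indices); $F_1<F_2$ means every element of $F_1$ is smaller than every element of $F_2$. A sumsequence of $a_1,a_2,\dotsc$ is a sequence $a_{F_1},a_{F_2},\dotsc$ for nonempty finite index sets $F_1<F_2<\dotsb$. A sequence is proper if $a_{F_1}\ne a_{F_2}$ for all nonempty finite $F_1<F_2$. *)

theory Defs
  imports Main
begin

text \<open>a_F for a nonempty finite index set F: the sum a_{i_1} + ... + a_{i_m}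
  taken in increasing order of the indices i_1 < ... < i_m (left-associated;
  the semigroup is associative, so the bracketing is irrelevant).\<close>
definition fsum :: "(nat \<Rightarrow> 'a::semigroup_add) \<Rightarrow> nat set \<Rightarrow> 'a" where
  "fsum a F = (let xs = map a (sorted_list_of_set F)
               in fold (\<lambda>x acc. acc + x) (tl xs) (hd xs))"

definition set_less :: "nat set \<Rightarrow> nat set \<Rightarrow> bool" where
  "set_less F1 F2 = (\<forall>x\<in>F1. \<forall>y\<in>F2. x < y)"

definition proper_seq :: "(nat \<Rightarrow> 'a::semigroup_add) \<Rightarrow> bool" where
  "proper_seq a = (\<forall>F1 F2. finite F1 \<and> F1 \<noteq> {} \<and> finite F2 \<and> F2 \<noteq> {} \<and> set_less F1 F2
                      \<longrightarrow> fsum a F1 \<noteq> fsum a F2)"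

definition sumsequence :: "(nat \<Rightarrow> 'a::semigroup_add) \<Rightarrow> (nat \<Rightarrow> 'a) \<Rightarrow> bool" where
  "sumsequence a b = (\<exists>Fs :: nat \<Rightarrow> nat set.
      (\<forall>n. finite (Fs n) \<and> Fs n \<noteq> {}) \<and>
      (\<forall>n. set_less (Fs n) (Fs (Suc n))) \<and>
      (\<forall>n. b n = fsum a (Fs n)))"

end

theory Submission
  imports Defs
begin

text \<open>Finite nonempty sets of indices form a partial semigroup under \<open>K \<union> L\<close> for \<open>K < L\<close>,
  and \<open>K \<mapsto> a\<^sub>K\<close> is a homomorphism on it. Ellis's argument, run with filters and Zorn's
  lemma instead of compactness, gives an idempotent ultrafilter \<open>e\<close> on finite sets all of
  whose members contain sets beyond every bound. For a proper sequence \<open>a\<^sub>K\<close> is not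
  \<open>e\<close>-almost constant, and idempotence lets ``\<open>c\<close> is not the \<open>e\<close>-limit of \<open>z + a\<^sub>K\<close>''
  pass to \<open>z + a\<^bsub>K'\<^esub>\<close> in place of \<open>z\<close> for \<open>e\<close>-almost all \<open>K'\<close>. Hence one can pick blocks
  \<open>K\<^sub>0 < K\<^sub>1 < \<dots>\<close> one at a time, each from the \<open>e\<close>-large set that keeps the finitely many
  current disjoint pairs \<open>F, G\<close> apart, and \<open>b\<^sub>n = a\<^bsub>K\<^sub>n\<^esub>\<close> works: if the largest index \<open>m\<close>
  of \<open>F \<union> G\<close> lies in \<open>F\<close>, then \<open>b\<^sub>F = b\<^bsub>F - {m}\<^esub> + b\<^sub>m\<close>, and \<open>K\<^sub>m\<close> was chosen to make
  this differ from \<open>b\<^sub>G\<close>.\<close>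

definition proper_filter :: "'x set set \<Rightarrow> bool" where
  "proper_filter F \<longleftrightarrow> UNIV \<in> F \<and> {} \<notin> F \<and> (\<forall>A B. A \<in> F \<longrightarrow> A \<subseteq> B \<longrightarrow> B \<in> F)
     \<and> (\<forall>A B. A \<in> F \<longrightarrow> B \<in> F \<longrightarrow> A \<inter> B \<in> F)"

definition ultrafilter :: "'x set set \<Rightarrow> bool" where
  "ultrafilter U \<longleftrightarrow> proper_filter U \<and> (\<forall>A. A \<in> U \<or> -A \<in> U)"

lemma proper_filter_UNIV: "proper_filter F \<Longrightarrow> UNIV \<in> F"
  and proper_filter_empty: "proper_filter F \<Longrightarrow> {} \<notin> F"
  and proper_filter_mono: "proper_filter F \<Longrightarrow> A \<in> F \<Longrightarrow> A \<subseteq> B \<Longrightarrow> B \<in> F"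
  and proper_filter_Int: "proper_filter F \<Longrightarrow> A \<in> F \<Longrightarrow> B \<in> F \<Longrightarrow> A \<inter> B \<in> F"
  by (simp_all add: proper_filter_def)

lemma ultrafilter_proper_filter: "ultrafilter U \<Longrightarrow> proper_filter U"
  by (simp add: ultrafilter_def)

lemma ultrafilter_Compl_iff: "ultrafilter U \<Longrightarrow> -A \<in> U \<longleftrightarrow> A \<notin> U"
  unfolding ultrafilter_def
  using proper_filter_Int[of U A "-A"] proper_filter_empty[of U] by auto

lemma ultrafilter_subset_imp_eq:
  assumes "ultrafilter U" "ultrafilter V" "U \<subseteq> V"
  shows "U = V"
  using assms ultrafilter_Compl_iff by blast

lemma proper_filter_Inter:
  assumes "S \<noteq> {}" "\<And>F. F \<in> S \<Longrightarrow> proper_filter F"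
  shows "proper_filter (\<Inter>S)"
  using assms unfolding proper_filter_def by blast

lemma proper_filter_Union_chain:
  assumes "C \<noteq> {}" "\<And>F. F \<in> C \<Longrightarrow> proper_filter F" "chain\<^sub>\<subseteq> C"
  shows "proper_filter (\<Union>C)"
  unfolding proper_filter_def
proof (intro conjI allI impI)
  show "UNIV \<in> \<Union>C" "{} \<notin> \<Union>C"
    using assms(1,2) proper_filter_UNIV proper_filter_empty by blast+
  show "B \<in> \<Union>C" if "A \<in> \<Union>C" "A \<subseteq> B" for A B
    using that assms(2) proper_filter_mono by blast
  show "A \<inter> B \<in> \<Union>C" if AB: "A \<in> \<Union>C" "B \<in> \<Union>C" for A B
  proof -
    obtain F G where FG: "F \<in> C" "G \<in> C" "A \<in> F" "B \<in> G" using AB by blast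
    from FG(1,2) assms(3) have "F \<subseteq> G \<or> G \<subseteq> F" unfolding chain_subset_def by blast
    then have "A \<inter> B \<in> F \<or> A \<inter> B \<in> G"
      using FG assms(2) proper_filter_Int by blast
    with FG show ?thesis by blast
  qed
qed

definition filter_join :: "'x set set \<Rightarrow> 'x set set \<Rightarrow> 'x set set" where
  "filter_join F G = {B. \<exists>C\<in>F. \<exists>D\<in>G. C \<inter> D \<subseteq> B}"

lemma mem_filter_join: "B \<in> filter_join F G \<longleftrightarrow> (\<exists>C\<in>F. \<exists>D\<in>G. C \<inter> D \<subseteq> B)"
  by (simp add: filter_join_def)

lemma proper_filter_filter_join:
  assumes F: "proper_filter F" and G: "proper_filter G"
    and meet: "\<And>C D. C \<in> F \<Longrightarrow> D \<in> G \<Longrightarrow> C \<inter> D \<noteq> {}"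
  shows "proper_filter (filter_join F G)"
  unfolding proper_filter_def mem_filter_join
proof (intro conjI allI impI)
  show "\<exists>C\<in>F. \<exists>D\<in>G. C \<inter> D \<subseteq> UNIV"
    using proper_filter_UNIV[OF F] proper_filter_UNIV[OF G] by blast
  show "\<not> (\<exists>C\<in>F. \<exists>D\<in>G. C \<inter> D \<subseteq> {})" using meet by blast
  show "\<exists>C\<in>F. \<exists>D\<in>G. C \<inter> D \<subseteq> B'" if "\<exists>C\<in>F. \<exists>D\<in>G. C \<inter> D \<subseteq> B" "B \<subseteq> B'" for B B'
    using that by blast
  show "\<exists>C\<in>F. \<exists>D\<in>G. C \<inter> D \<subseteq> B \<inter> B'"
    if BB': "\<exists>C\<in>F. \<exists>D\<in>G. C \<inter> D \<subseteq> B" "\<exists>C\<in>F. \<exists>D\<in>G. C \<inter> D \<subseteq> B'" for B B'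
  proof -
    obtain C D C' D' where "C \<in> F" "D \<in> G" "C \<inter> D \<subseteq> B" "C' \<in> F" "D' \<in> G" "C' \<inter> D' \<subseteq> B'"
      using BB' by blast
    then have "C \<inter> C' \<in> F" "D \<inter> D' \<in> G" "(C \<inter> C') \<inter> (D \<inter> D') \<subseteq> B \<inter> B'"
      using proper_filter_Int[OF F] proper_filter_Int[OF G] by blast+
    then show ?thesis by blast
  qed
qed

lemma filter_join_upper:
  assumes "proper_filter F" "proper_filter G"
  shows "F \<subseteq> filter_join F G" "G \<subseteq> filter_join F G"
  unfolding subset_iff mem_filter_join
  using proper_filter_UNIV[OF assms(2)] proper_filter_UNIV[OF assms(1)]
  by (metis Int_UNIV_right order_refl, metis Int_UNIV_left order_refl)

lemma ultrafilter_exists_superset: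
  assumes F: "proper_filter F"
  shows "\<exists>U. ultrafilter U \<and> F \<subseteq> U"
proof -
  define Z where "Z = {G. proper_filter G \<and> F \<subseteq> G}"
  have "\<forall>C\<in>chains Z. \<exists>U\<in>Z. \<forall>X\<in>C. X \<subseteq> U"
  proof
    fix C assume C: "C \<in> chains Z"
    show "\<exists>U\<in>Z. \<forall>X\<in>C. X \<subseteq> U"
    proof (cases "C = {}")
      case True
      then show ?thesis using F unfolding Z_def by blast
    next
      case False
      have "proper_filter (\<Union>C)"
        using proper_filter_Union_chain[OF False] C unfolding Z_def chains_def by blast
      moreover have "F \<subseteq> \<Union>C" using False C unfolding Z_def chains_def by blast
      ultimately show ?thesis unfolding Z_def by blast
    qed
  qed
  from Zorn_Lemma2[OF this] obtain M where "M \<in> Z" and max_Z: "\<forall>X\<in>Z. M \<subseteq> X \<longrightarrow> X = M"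
    by blast
  then have M: "proper_filter M" "F \<subseteq> M" unfolding Z_def by auto
  have max: "G = M" if "proper_filter G" "M \<subseteq> G" for G
    using max_Z that M(2) unfolding Z_def by blast
  have "A \<in> M \<or> -A \<in> M" for A
  proof (rule ccontr)
    assume nA: "\<not> (A \<in> M \<or> -A \<in> M)"
    define P where "P = {B. A \<subseteq> B}"
    have "A \<noteq> {}" using nA proper_filter_UNIV[OF M(1)] by auto
    then have P: "proper_filter P" unfolding proper_filter_def P_def by blast
    have "C \<inter> D \<noteq> {}" if "C \<in> M" "D \<in> P" for C D
    proof
      assume "C \<inter> D = {}"
      then have "C \<subseteq> -A" using \<open>D \<in> P\<close> unfolding P_def by blast
      then show False using nA proper_filter_mono[OF M(1) \<open>C \<in> M\<close>] by blast
    qed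
    then have "filter_join M P = M"
      using max proper_filter_filter_join[OF M(1) P] filter_join_upper[OF M(1) P] by simp
    moreover have "A \<in> P" unfolding P_def by simp
    ultimately show False
      using nA filter_join_upper(2)[OF M(1) P] by blast
  qed
  then show ?thesis using M unfolding ultrafilter_def by blast
qed

definition uf_section :: "'x set set set \<Rightarrow> 'x set set \<Rightarrow> 'x set set" where
  "uf_section v A = {K. {L. K \<union> L \<in> A} \<in> v}"

definition uf_sum :: "'x set set set \<Rightarrow> 'x set set set \<Rightarrow> 'x set set set" where
  "uf_sum u v = {A. uf_section v A \<in> u}"

lemma uf_section_UNIV: "proper_filter v \<Longrightarrow> uf_section v UNIV = UNIV"
  and uf_section_empty: "proper_filter v \<Longrightarrow> uf_section v {} = {}"
  unfolding uf_section_def using proper_filter_UNIV proper_filter_empty by auto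

lemma uf_section_mono: "proper_filter v \<Longrightarrow> A \<subseteq> B \<Longrightarrow> uf_section v A \<subseteq> uf_section v B"
  unfolding uf_section_def by (auto elim!: proper_filter_mono)

lemma uf_section_Int:
  assumes "proper_filter v"
  shows "uf_section v (A \<inter> B) = uf_section v A \<inter> uf_section v B"
proof -
  have "{L. K \<union> L \<in> A \<inter> B} = {L. K \<union> L \<in> A} \<inter> {L. K \<union> L \<in> B}" for K by blast
  then show ?thesis
    unfolding uf_section_def using assms proper_filter_Int proper_filter_mono by fastforce
qed

lemma uf_section_Compl:
  assumes "ultrafilter v"
  shows "uf_section v (-A) = - uf_section v A"
proof -
  have "{L. K \<union> L \<in> -A} = - {L. K \<union> L \<in> A}" for K by blast
  then show ?thesis unfolding uf_section_def using ultrafilter_Compl_iff[OF assms] by auto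
qed

lemma ultrafilter_uf_sum:
  assumes u: "ultrafilter u" and v: "ultrafilter v"
  shows "ultrafilter (uf_sum u v)"
proof -
  have fu: "proper_filter u" and fv: "proper_filter v" using u v ultrafilter_proper_filter by auto
  have "proper_filter (uf_sum u v)" unfolding proper_filter_def uf_sum_def mem_Collect_eq
  proof (intro conjI allI impI)
    show "uf_section v UNIV \<in> u" "uf_section v {} \<notin> u"
      using uf_section_UNIV[OF fv] uf_section_empty[OF fv]
        proper_filter_UNIV[OF fu] proper_filter_empty[OF fu] by simp_all
    show "uf_section v B \<in> u" if "uf_section v A \<in> u" "A \<subseteq> B" for A B
      using that uf_section_mono[OF fv] proper_filter_mono[OF fu] by metis
    show "uf_section v (A \<inter> B) \<in> u" if "uf_section v A \<in> u" "uf_section v B \<in> u" for A B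
      using that uf_section_Int[OF fv] proper_filter_Int[OF fu] by simp
  qed
  moreover have "A \<in> uf_sum u v \<or> -A \<in> uf_sum u v" for A
    unfolding uf_sum_def using uf_section_Compl[OF v, of A] ultrafilter_Compl_iff[OF u] by auto
  ultimately show ?thesis unfolding ultrafilter_def by blast
qed

lemma uf_sum_assoc: "uf_sum (uf_sum u v) w = uf_sum u (uf_sum v w)"
proof -
  have "uf_section v (uf_section w A) = uf_section (uf_sum v w) A" for A
    unfolding uf_section_def uf_sum_def by (simp add: Un_assoc)
  then show ?thesis unfolding uf_sum_def by (auto simp: uf_section_def)
qed

definition above :: "nat \<Rightarrow> nat set set" where
  "above N = {K. K \<noteq> {} \<and> finite K \<and> (\<forall>x\<in>K. N < x)}"

definition tail_filter :: "nat set set set" where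
  "tail_filter = {A. \<exists>N. above N \<subseteq> A}"

lemma above_antimono: "N \<le> M \<Longrightarrow> above M \<subseteq> above N"
  unfolding above_def by auto

lemma above_in_tail_filter: "above N \<in> tail_filter"
  unfolding tail_filter_def by blast

lemma proper_filter_tail_filter: "proper_filter tail_filter"
  unfolding proper_filter_def tail_filter_def mem_Collect_eq
proof (intro conjI allI impI)
  show "\<exists>N. above N \<subseteq> UNIV" by simp
  have "{Suc N} \<in> above N" for N unfolding above_def by simp
  then show "\<not> (\<exists>N. above N \<subseteq> {})" by blast
  show "\<exists>N. above N \<subseteq> B" if "\<exists>N. above N \<subseteq> A" "A \<subseteq> B" for A B
    using that by blast
  show "\<exists>N. above N \<subseteq> A \<inter> B" if AB: "\<exists>N. above N \<subseteq> A" "\<exists>N. above N \<subseteq> B" for A B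
  proof -
    obtain N M where "above N \<subseteq> A" "above M \<subseteq> B" using AB by blast
    then have "above (max N M) \<subseteq> A \<inter> B"
      using above_antimono[of N "max N M"] above_antimono[of M "max N M"] by auto
    then show ?thesis by blast
  qed
qed

lemma tail_filter_uf_sum:
  assumes "proper_filter u" "proper_filter v" "tail_filter \<subseteq> u" "tail_filter \<subseteq> v"
  shows "tail_filter \<subseteq> uf_sum u v"
proof
  fix A assume "A \<in> tail_filter"
  then obtain N where N: "above N \<subseteq> A" unfolding tail_filter_def by blast
  have "above N \<subseteq> {L. K \<union> L \<in> A}" if "K \<in> above N" for K
    using that N unfolding above_def by auto
  then have "above N \<subseteq> uf_section v A"
    unfolding uf_section_def
    using proper_filter_mono[OF assms(2)] assms(4) above_in_tail_filter by blast
  then show "A \<in> uf_sum u v"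
    unfolding uf_sum_def
    using proper_filter_mono[OF assms(1)] assms(3) above_in_tail_filter by blast
qed

text \<open>The ultrafilters containing a semigroup filter form a closed subsemigroup of the
  Stone-Cech compactification; a maximal semigroup filter corresponds to a minimal such
  subsemigroup, and Ellis's argument shows that every ultrafilter containing it is idempotent.\<close>

definition semigroup_filter :: "nat set set set \<Rightarrow> bool" where
  "semigroup_filter F \<longleftrightarrow> proper_filter F \<and> tail_filter \<subseteq> F \<and>
     (\<forall>u v. ultrafilter u \<longrightarrow> ultrafilter v \<longrightarrow> F \<subseteq> u \<longrightarrow> F \<subseteq> v \<longrightarrow> F \<subseteq> uf_sum u v)"

lemma semigroup_filter_tail_filter: "semigroup_filter tail_filter"
  unfolding semigroup_filter_def
  using proper_filter_tail_filter tail_filter_uf_sum ultrafilter_proper_filter by blast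

lemma maximal_semigroup_filter_exists:
  "\<exists>F. semigroup_filter F \<and> (\<forall>G. semigroup_filter G \<longrightarrow> F \<subseteq> G \<longrightarrow> G = F)"
proof -
  have "\<forall>C\<in>chains (Collect semigroup_filter). \<exists>U\<in>Collect semigroup_filter. \<forall>X\<in>C. X \<subseteq> U"
  proof
    fix C assume C: "C \<in> chains (Collect semigroup_filter)"
    show "\<exists>U\<in>Collect semigroup_filter. \<forall>X\<in>C. X \<subseteq> U"
    proof (cases "C = {}")
      case True
      then show ?thesis using semigroup_filter_tail_filter by blast
    next
      case False
      have sg: "\<And>G. G \<in> C \<Longrightarrow> semigroup_filter G" and ch: "chain\<^sub>\<subseteq> C"
        using C unfolding chains_def by auto
      have "proper_filter (\<Union>C)"
        using proper_filter_Union_chain[OF False _ ch] sg semigroup_filter_def by blast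
      moreover have "tail_filter \<subseteq> \<Union>C" using False sg semigroup_filter_def by blast
      moreover have "\<Union>C \<subseteq> uf_sum u v"
        if "ultrafilter u" "ultrafilter v" "\<Union>C \<subseteq> u" "\<Union>C \<subseteq> v" for u v
        using that sg unfolding semigroup_filter_def by blast
      ultimately have "semigroup_filter (\<Union>C)" unfolding semigroup_filter_def by blast
      then show ?thesis by blast
    qed
  qed
  from Zorn_Lemma2[OF this] show ?thesis by blast
qed

lemma semigroup_filter_Inter:
  assumes "semigroup_filter F" "S \<noteq> {}" "\<And>w. w \<in> S \<Longrightarrow> ultrafilter w \<and> F \<subseteq> w"
    and "\<And>w1 w2. ultrafilter w1 \<Longrightarrow> ultrafilter w2 \<Longrightarrow> \<Inter>S \<subseteq> w1 \<Longrightarrow> \<Inter>S \<subseteq> w2 \<Longrightarrow>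
           \<Inter>S \<subseteq> uf_sum w1 w2"
  shows "semigroup_filter (\<Inter>S)"
  unfolding semigroup_filter_def
proof (intro conjI allI impI)
  show "proper_filter (\<Inter>S)"
    using assms(2,3) ultrafilter_proper_filter proper_filter_Inter by metis
  show "tail_filter \<subseteq> \<Inter>S" using assms(1,3) unfolding semigroup_filter_def by blast
qed (use assms(4) in blast)

lemma ultrafilter_above_right_sums:
  assumes F: "proper_filter F" and e: "ultrafilter e" and w: "ultrafilter w"
    and sub: "\<Inter>{uf_sum u e |u. ultrafilter u \<and> F \<subseteq> u} \<subseteq> w"
  shows "\<exists>u. ultrafilter u \<and> F \<subseteq> u \<and> w = uf_sum u e"
proof -
  have fe: "proper_filter e" and fw: "proper_filter w" using e w ultrafilter_proper_filter by auto
  have meet: "C \<inter> uf_section e A \<noteq> {}" if "C \<in> F" "A \<in> w" for C A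
  proof
    assume CA: "C \<inter> uf_section e A = {}"
    have "-A \<in> uf_sum u e" if u: "ultrafilter u" "F \<subseteq> u" for u
    proof -
      have "uf_section e A \<notin> u"
        using u \<open>C \<in> F\<close> CA ultrafilter_proper_filter proper_filter_Int proper_filter_empty
        by (metis subsetD)
      then show ?thesis
        unfolding uf_sum_def using uf_section_Compl[OF e] ultrafilter_Compl_iff[OF u(1)] by simp
    qed
    then have "-A \<in> w" using sub by blast
    then show False using \<open>A \<in> w\<close> ultrafilter_Compl_iff[OF w] by blast
  qed
  define Q where "Q = {B. \<exists>A\<in>w. uf_section e A \<subseteq> B}"
  have Q: "proper_filter Q" unfolding proper_filter_def Q_def mem_Collect_eq
  proof (intro conjI allI impI)
    show "\<exists>A\<in>w. uf_section e A \<subseteq> UNIV" using proper_filter_UNIV[OF fw] by blast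
    show "\<not> (\<exists>A\<in>w. uf_section e A \<subseteq> {})"
      using meet[OF proper_filter_UNIV[OF F]] by blast
    show "\<exists>A\<in>w. uf_section e A \<subseteq> B'" if "\<exists>A\<in>w. uf_section e A \<subseteq> B" "B \<subseteq> B'" for B B'
      using that by blast
    show "\<exists>A\<in>w. uf_section e A \<subseteq> B \<inter> B'"
      if BB': "\<exists>A\<in>w. uf_section e A \<subseteq> B" "\<exists>A\<in>w. uf_section e A \<subseteq> B'" for B B'
    proof -
      obtain A A' where "A \<in> w" "A' \<in> w" "uf_section e A \<subseteq> B" "uf_section e A' \<subseteq> B'"
        using BB' by blast
      then have "A \<inter> A' \<in> w" "uf_section e (A \<inter> A') \<subseteq> B \<inter> B'"
        using proper_filter_Int[OF fw] uf_section_Int[OF fe] by auto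
      then show ?thesis by blast
    qed
  qed
  have "C \<inter> D \<noteq> {}" if "C \<in> F" "D \<in> Q" for C D
    using that meet unfolding Q_def by blast
  then obtain u where u: "ultrafilter u" "filter_join F Q \<subseteq> u"
    using ultrafilter_exists_superset proper_filter_filter_join[OF F Q] by blast
  have "w \<subseteq> uf_sum u e"
  proof
    fix A assume "A \<in> w"
    then have "uf_section e A \<in> Q" unfolding Q_def by blast
    then show "A \<in> uf_sum u e" using u filter_join_upper(2)[OF F Q] unfolding uf_sum_def by blast
  qed
  then have "w = uf_sum u e" using ultrafilter_subset_imp_eq w ultrafilter_uf_sum u(1) e by blast
  then show ?thesis using u filter_join_upper(1)[OF F Q] by blast
qed

lemma maximal_semigroup_filter_absorbs:
  assumes F: "semigroup_filter F" and max: "\<And>G. semigroup_filter G \<Longrightarrow> F \<subseteq> G \<Longrightarrow> G = F"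
    and e: "ultrafilter e" "F \<subseteq> e"
  shows "\<exists>u. ultrafilter u \<and> F \<subseteq> u \<and> uf_sum u e = e"
proof -
  define R where "R = {uf_sum u e |u. ultrafilter u \<and> F \<subseteq> u}"
  have pF: "proper_filter F" and closed: "\<And>u v. ultrafilter u \<Longrightarrow> ultrafilter v \<Longrightarrow>
      F \<subseteq> u \<Longrightarrow> F \<subseteq> v \<Longrightarrow> F \<subseteq> uf_sum u v"
    using F unfolding semigroup_filter_def by auto
  have R: "w \<in> R" if "ultrafilter w" "\<Inter>R \<subseteq> w" for w
    using ultrafilter_above_right_sums[OF pF e(1) that(1)] that(2) unfolding R_def by blast
  have R_above: "ultrafilter w \<and> F \<subseteq> w" if "w \<in> R" for w
    using that e closed ultrafilter_uf_sum unfolding R_def by blast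
  have ne: "R \<noteq> {}" using e R_above unfolding R_def by blast
  have closed_R: "\<Inter>R \<subseteq> uf_sum w1 w2"
    if w: "ultrafilter w1" "ultrafilter w2" "\<Inter>R \<subseteq> w1" "\<Inter>R \<subseteq> w2" for w1 w2
  proof -
    obtain u2 where u2: "ultrafilter u2" "F \<subseteq> u2" "w2 = uf_sum u2 e"
      using R[OF w(2,4)] unfolding R_def by blast
    have "uf_sum w1 w2 = uf_sum (uf_sum w1 u2) e" using u2(3) uf_sum_assoc by metis
    moreover have "F \<subseteq> uf_sum w1 u2" using closed[OF w(1) u2(1) _ u2(2)] R_above R[OF w(1,3)] by blast
    ultimately have "uf_sum w1 w2 \<in> R" using ultrafilter_uf_sum[OF w(1) u2(1)] unfolding R_def by blast
    then show ?thesis by blast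
  qed
  have "semigroup_filter (\<Inter>R)" by (rule semigroup_filter_Inter[OF F ne R_above closed_R])
  moreover have "F \<subseteq> \<Inter>R" using R_above by blast
  ultimately have "\<Inter>R = F" using max by blast
  then show ?thesis using R[OF e(1)] e(2) unfolding R_def by auto
qed

lemma maximal_semigroup_filter_idempotent:
  assumes F: "semigroup_filter F" and max: "\<And>G. semigroup_filter G \<Longrightarrow> F \<subseteq> G \<Longrightarrow> G = F"
    and e: "ultrafilter e" "F \<subseteq> e"
  shows "uf_sum e e = e"
proof -
  define S where "S = {u. ultrafilter u \<and> F \<subseteq> u \<and> uf_sum u e = e}"
  have S_absorbs: "uf_sum w e = e" if w: "ultrafilter w" "\<Inter>S \<subseteq> w" for w
  proof -
    have "e \<subseteq> uf_sum w e"
    proof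
      fix A assume "A \<in> e"
      then have "uf_section e A \<in> \<Inter>S" unfolding S_def uf_sum_def by auto
      then show "A \<in> uf_sum w e" using w(2) unfolding uf_sum_def by blast
    qed
    then show ?thesis using ultrafilter_subset_imp_eq e(1) ultrafilter_uf_sum[OF w(1) e(1)] by blast
  qed
  have S_above: "ultrafilter w \<and> F \<subseteq> w" if "w \<in> S" for w
    using that unfolding S_def by blast
  have ne: "S \<noteq> {}" using maximal_semigroup_filter_absorbs[OF F max e] unfolding S_def by blast
  have closed_S: "\<Inter>S \<subseteq> uf_sum w1 w2"
    if w: "ultrafilter w1" "ultrafilter w2" "\<Inter>S \<subseteq> w1" "\<Inter>S \<subseteq> w2" for w1 w2
  proof -
    have "F \<subseteq> w1" "F \<subseteq> w2" using w(3,4) S_above by blast+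
    then have "F \<subseteq> uf_sum w1 w2" using F w(1,2) unfolding semigroup_filter_def by blast
    moreover have "uf_sum (uf_sum w1 w2) e = e" using S_absorbs w uf_sum_assoc by metis
    ultimately have "uf_sum w1 w2 \<in> S" using ultrafilter_uf_sum[OF w(1,2)] unfolding S_def by blast
    then show ?thesis by blast
  qed
  have "semigroup_filter (\<Inter>S)" by (rule semigroup_filter_Inter[OF F ne S_above closed_S])
  moreover have "F \<subseteq> \<Inter>S" using S_above by blast
  ultimately have "\<Inter>S = F" using max by blast
  then show ?thesis using S_absorbs e by blast
qed

theorem idempotent_ultrafilter_exists: "\<exists>e. ultrafilter e \<and> tail_filter \<subseteq> e \<and> uf_sum e e = e"
proof -
  obtain F where F: "semigroup_filter F" and max: "\<forall>G. semigroup_filter G \<longrightarrow> F \<subseteq> G \<longrightarrow> G = F"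
    using maximal_semigroup_filter_exists by blast
  have "proper_filter F" using F unfolding semigroup_filter_def by blast
  then obtain e where e: "ultrafilter e" "F \<subseteq> e" using ultrafilter_exists_superset by blast
  have "tail_filter \<subseteq> e" using F e(2) unfolding semigroup_filter_def by blast
  then show ?thesis using maximal_semigroup_filter_idempotent[OF F max[rule_format] e] e(1) by blast
qed

lemma fold_plus_shift:
  "fold (\<lambda>x acc. acc + x) xs (s + t) = s + fold (\<lambda>x acc. acc + x) xs (t::'a::semigroup_add)"
  by (induction xs arbitrary: t) (simp_all add: add.assoc)

lemma sorted_list_of_set_Un_set_less:
  assumes "finite K" "finite L" "set_less K L"
  shows "sorted_list_of_set (K \<union> L) = sorted_list_of_set K @ sorted_list_of_set L"
proof (rule sorted_distinct_set_unique)
  show "sorted (sorted_list_of_set K @ sorted_list_of_set L)"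
    using assms unfolding set_less_def by (auto simp: sorted_append less_imp_le)
  show "distinct (sorted_list_of_set K @ sorted_list_of_set L)"
    using assms unfolding set_less_def by auto
qed (use assms in auto)

lemma fsum_Un:
  assumes "finite K" "finite L" "K \<noteq> {}" "L \<noteq> {}" "set_less K L"
  shows "fsum a (K \<union> L) = fsum a K + fsum a L"
proof -
  obtain x xs where xs: "map a (sorted_list_of_set K) = x # xs"
    using assms(1,3) by (cases "sorted_list_of_set K") auto
  obtain y ys where ys: "map a (sorted_list_of_set L) = y # ys"
    using assms(2,4) by (cases "sorted_list_of_set L") auto
  show ?thesis
    unfolding fsum_def Let_def sorted_list_of_set_Un_set_less[OF assms(1,2,5)] map_append xs ys
    by (simp flip: fold_plus_shift)
qed

lemma fsum_singleton [simp]: "fsum a {k} = a k"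
  unfolding fsum_def by simp

lemma fsum_cong_lessThan:
  assumes "F \<subseteq> {..<n}" "\<And>i. i < n \<Longrightarrow> b' i = b i"
  shows "fsum b' F = fsum b F"
proof -
  have "map b' (sorted_list_of_set F) = map b (sorted_list_of_set F)"
    using assms finite_subset[OF assms(1)] by (auto intro: map_cong)
  then show ?thesis unfolding fsum_def Let_def by (simp only:)
qed

text \<open>A semigroup need not have a zero, so the sum over the empty index set is
  \<^const>\<open>None\<close>, and \<open>prefix_add z s\<close> is \<open>z + s\<close> with \<open>None + s = s\<close>.\<close>

definition opt_fsum :: "(nat \<Rightarrow> 'a::semigroup_add) \<Rightarrow> nat set \<Rightarrow> 'a option" where
  "opt_fsum b F = (if F = {} then None else Some (fsum b F))"

fun prefix_add :: "'a::semigroup_add option \<Rightarrow> 'a \<Rightarrow> 'a" where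
  "prefix_add None s = s"
| "prefix_add (Some x) s = x + s"

lemma prefix_add_assoc: "prefix_add (Some (prefix_add z s)) t = prefix_add z (s + t)"
  by (cases z) (simp_all add: add.assoc)

lemma opt_fsum_cong_lessThan:
  "F \<subseteq> {..<n} \<Longrightarrow> (\<And>i. i < n \<Longrightarrow> b' i = b i) \<Longrightarrow> opt_fsum b' F = opt_fsum b F"
  unfolding opt_fsum_def using fsum_cong_lessThan by metis

lemma fsum_insert_max:
  assumes "F \<subseteq> {..<m}"
  shows "fsum b (insert m F) = prefix_add (opt_fsum b F) (b m)"
proof (cases "F = {}")
  case False
  have "set_less F {m}" using assms unfolding set_less_def by auto
  then have "fsum b (F \<union> {m}) = fsum b F + b m"
    using fsum_Un[OF finite_subset[OF assms] _ False, of "{m}" b] by simp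
  then show ?thesis using False unfolding opt_fsum_def by (simp add: insert_absorb2 Un_commute)
qed (simp add: opt_fsum_def)

lemma opt_fsum_insert_max:
  "F \<subseteq> {..<m} \<Longrightarrow> opt_fsum b (insert m F) = Some (prefix_add (opt_fsum b F) (b m))"
  using fsum_insert_max[of F m b] by (simp add: opt_fsum_def[of b "insert m F"])

text \<open>The proof splits off the largest index of \<open>F \<union> G\<close>.\<close>

lemma fsum_disjoint_neq:
  assumes new: "\<And>m F G. F \<subseteq> {..<m} \<Longrightarrow> G \<subseteq> {..<m} \<Longrightarrow> F \<inter> G = {} \<Longrightarrow> G \<noteq> {} \<Longrightarrow>
                 prefix_add (opt_fsum b F) (b m) \<noteq> fsum b G"
    and "finite F" "F \<noteq> {}" "finite G" "G \<noteq> {}" "F \<inter> G = {}"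
  shows "fsum b F \<noteq> fsum b G"
proof -
  have neq: "fsum b F \<noteq> fsum b G"
    if fin: "finite F" "finite G" and "G \<noteq> {}" "F \<inter> G = {}" "Max (F \<union> G) \<in> F" for F G
  proof -
    define m where "m = Max (F \<union> G)"
    have le: "x \<le> m" if "x \<in> F \<union> G" for x
      using Max_ge[of "F \<union> G" x] fin that unfolding m_def by blast
    have "m \<notin> G" "m \<in> F" using that unfolding m_def by blast+
    then have "F - {m} \<subseteq> {..<m}" "G \<subseteq> {..<m}" "(F - {m}) \<inter> G = {}"
      using le \<open>F \<inter> G = {}\<close> by (auto simp: order_less_le)
    then have "prefix_add (opt_fsum b (F - {m})) (b m) \<noteq> fsum b G"
      using new \<open>G \<noteq> {}\<close> by blast
    moreover have "insert m (F - {m}) = F" using \<open>m \<in> F\<close> by blast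
    ultimately show ?thesis using fsum_insert_max[OF \<open>F - {m} \<subseteq> {..<m}\<close>] by metis
  qed
  have "Max (F \<union> G) \<in> F \<union> G" using assms(2-5) by (intro Max_in) auto
  then show ?thesis
    using neq[of F G] neq[of G F] assms(2-6) by (auto simp: Un_commute Int_commute)
qed

locale idempotent_ultrafilter =
  fixes e :: "nat set set set"
  assumes ultrafilter: "ultrafilter e"
    and tail_filter_le: "tail_filter \<subseteq> e"
    and idempotent: "uf_sum e e = e"
begin

definition almost :: "(nat set \<Rightarrow> bool) \<Rightarrow> bool" where
  "almost P \<longleftrightarrow> {K. P K} \<in> e"

lemma proper: "proper_filter e"
  using ultrafilter by (rule ultrafilter_proper_filter)

lemma almost_True: "almost (\<lambda>K. True)"
  unfolding almost_def using proper_filter_UNIV[OF proper] by simp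

lemma almost_conj: "almost P \<Longrightarrow> almost Q \<Longrightarrow> almost (\<lambda>K. P K \<and> Q K)"
  unfolding almost_def using proper_filter_Int[OF proper] by (simp add: Collect_conj_eq)

lemma almost_mono: "almost P \<Longrightarrow> (\<And>K. P K \<Longrightarrow> Q K) \<Longrightarrow> almost Q"
  unfolding almost_def using proper_filter_mono[OF proper, of "{K. P K}" "{K. Q K}"] by blast

lemma almost_exists: "almost P \<Longrightarrow> \<exists>K. P K"
  unfolding almost_def using proper_filter_empty[OF proper] by (metis Collect_empty_eq)

lemma almost_not: "\<not> almost P \<Longrightarrow> almost (\<lambda>K. \<not> P K)"
  unfolding almost_def using ultrafilter_Compl_iff[OF ultrafilter, of "{K. P K}"]
  by (simp add: Collect_neg_eq)

lemma almost_ball: "finite S \<Longrightarrow> (\<And>x. x \<in> S \<Longrightarrow> almost (P x)) \<Longrightarrow> almost (\<lambda>K. \<forall>x\<in>S. P x K)"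
proof (induction S rule: finite_induct)
  case empty
  then show ?case using almost_True by simp
next
  case (insert x S)
  then show ?case using almost_conj[of "P x"] by simp
qed

lemma almost_above: "almost (\<lambda>K. K \<in> above N)"
  unfolding almost_def using above_in_tail_filter tail_filter_le by (metis Collect_mem_eq subsetD)

lemma almost_union:
  assumes "almost (\<lambda>K. almost (\<lambda>L. P (K \<union> L)))"
  shows "almost P"
proof -
  have "{K. P K} \<in> uf_sum e e"
    using assms unfolding almost_def uf_sum_def uf_section_def by simp
  then show ?thesis unfolding almost_def idempotent .
qed

lemma almost_increasing_pair:
  "almost (\<lambda>K. almost (\<lambda>L. finite K \<and> K \<noteq> {} \<and> finite L \<and> L \<noteq> {} \<and> set_less K L))"
proof (rule almost_mono[OF almost_above[of 0]])
  fix K assume K: "K \<in> above 0"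
  show "almost (\<lambda>L. finite K \<and> K \<noteq> {} \<and> finite L \<and> L \<noteq> {} \<and> set_less K L)"
  proof (rule almost_mono[OF almost_above[of "Max K"]])
    fix L assume L: "L \<in> above (Max K)"
    have "x < y" if "x \<in> K" "y \<in> L" for x y
    proof -
      have "x \<le> Max K" using K that(1) Max_ge unfolding above_def by blast
      also have "Max K < y" using L that(2) unfolding above_def by blast
      finally show ?thesis .
    qed
    then show "finite K \<and> K \<noteq> {} \<and> finite L \<and> L \<noteq> {} \<and> set_less K L"
      using K L unfolding above_def set_less_def by blast
  qed
qed

text \<open>Idempotence of \<open>e\<close> in the form used for sums: \<open>a\<^sub>K + a\<^sub>L = a\<^bsub>K \<union> L\<^esub>\<close> for \<open>K < L\<close>.\<close>

lemma almost_fsum_add: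
  assumes "almost (\<lambda>K. almost (\<lambda>L. P (fsum a K + fsum a L)))"
  shows "almost (\<lambda>K. P (fsum a K))"
proof (rule almost_union)
  show "almost (\<lambda>K. almost (\<lambda>L. P (fsum a (K \<union> L))))"
  proof (rule almost_mono[OF almost_conj[OF assms almost_increasing_pair]])
    fix K assume K: "almost (\<lambda>L. P (fsum a K + fsum a L)) \<and>
      almost (\<lambda>L. finite K \<and> K \<noteq> {} \<and> finite L \<and> L \<noteq> {} \<and> set_less K L)"
    show "almost (\<lambda>L. P (fsum a (K \<union> L)))"
      by (rule almost_mono[OF almost_conj[OF K[THEN conjunct1] K[THEN conjunct2]]])
        (simp add: fsum_Un)
  qed
qed

end

locale proper_seq_along = idempotent_ultrafilter +
  fixes a :: "nat \<Rightarrow> 'a::semigroup_add"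
  assumes proper_seq: "proper_seq a"
begin

definition tends :: "'a option \<Rightarrow> 'a \<Rightarrow> bool" where
  "tends z c \<longleftrightarrow> almost (\<lambda>K. prefix_add z (fsum a K) = c)"

lemma tends_unique:
  assumes "tends z c" "tends z c'"
  shows "c = c'"
proof -
  obtain K where "prefix_add z (fsum a K) = c \<and> prefix_add z (fsum a K) = c'"
    using almost_exists[OF almost_conj[OF assms[unfolded tends_def]]] by blast
  then show ?thesis by blast
qed

lemma not_tends_None: "\<not> tends None c"
proof
  assume "tends None c"
  then have c: "almost (\<lambda>K. fsum a K = c)" unfolding tends_def by simp
  have "almost (\<lambda>K. fsum a K = c \<and> almost (\<lambda>L. fsum a L = c \<and>
          finite K \<and> K \<noteq> {} \<and> finite L \<and> L \<noteq> {} \<and> set_less K L))"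
  proof (rule almost_mono[OF almost_conj[OF c almost_increasing_pair]])
    fix K
    assume K: "fsum a K = c \<and>
      almost (\<lambda>L. finite K \<and> K \<noteq> {} \<and> finite L \<and> L \<noteq> {} \<and> set_less K L)"
    then show "fsum a K = c \<and> almost (\<lambda>L. fsum a L = c \<and>
          finite K \<and> K \<noteq> {} \<and> finite L \<and> L \<noteq> {} \<and> set_less K L)"
      using almost_conj[OF c K[THEN conjunct2]] by simp
  qed
  then obtain K where Kc: "fsum a K = c" and
    KL: "almost (\<lambda>L. fsum a L = c \<and> finite K \<and> K \<noteq> {} \<and> finite L \<and> L \<noteq> {} \<and> set_less K L)"
    using almost_exists by blast
  obtain L where "fsum a K = fsum a L" "finite K" "K \<noteq> {}" "finite L" "L \<noteq> {}"
    "set_less K L"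
    using almost_exists[OF KL] Kc by blast
  then show False using proper_seq unfolding proper_seq_def by blast
qed

lemma almost_not_tends_Some:
  assumes "\<not> tends z w"
  shows "almost (\<lambda>K. \<not> tends (Some (prefix_add z (fsum a K))) w)"
proof (rule ccontr)
  assume "\<not> ?thesis"
  then have "almost (\<lambda>K. tends (Some (prefix_add z (fsum a K))) w)"
    using almost_not[of "\<lambda>K. \<not> tends (Some (prefix_add z (fsum a K))) w"] by simp
  then have "almost (\<lambda>K. almost (\<lambda>L. prefix_add z (fsum a K + fsum a L) = w))"
    unfolding tends_def prefix_add_assoc .
  then have "tends z w" unfolding tends_def by (rule almost_fsum_add)
  with assms show False ..
qed

lemma almost_not_tends_shifted:
  assumes "\<forall>c. \<not> (tends z c \<and> tends w c)"
  shows "almost (\<lambda>K. \<not> tends z (prefix_add w (fsum a K)))"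
proof (rule ccontr)
  assume "\<not> ?thesis"
  then have ev: "almost (\<lambda>K. tends z (prefix_add w (fsum a K)))"
    using almost_not[of "\<lambda>K. \<not> tends z (prefix_add w (fsum a K))"] by simp
  then obtain K0 where K0: "tends z (prefix_add w (fsum a K0))" using almost_exists by blast
  have "tends w (prefix_add w (fsum a K0))"
    unfolding tends_def by (rule almost_mono[OF ev]) (rule tends_unique[OF _ K0])
  with assms K0 show False by blast
qed

lemma almost_no_common_limit_Some:
  assumes "\<forall>c. \<not> (tends z c \<and> tends w c)"
  shows "almost (\<lambda>K. \<forall>c. \<not> (tends (Some (prefix_add z (fsum a K))) c \<and> tends w c))"
proof (cases "\<exists>c. tends w c")
  case False
  then show ?thesis using almost_True by simp
next
  case True
  then obtain c0 where c0: "tends w c0" by blast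
  then have "\<not> tends z c0" using assms by blast
  from almost_not_tends_Some[OF this] show ?thesis
    by (rule almost_mono) (metis c0 tends_unique)
qed

end

lemma subset_lessThan_Suc_cases:
  assumes "F \<subseteq> {..<Suc n}"
  obtains "F \<subseteq> {..<n}" | F' where "F' \<subseteq> {..<n}" "F = insert n F'"
proof (cases "n \<in> F")
  case True
  then have "F - {n} \<subseteq> {..<n}" "F = insert n (F - {n})" using assms by (auto simp: less_Suc_eq)
  then show ?thesis using that(2) by blast
next
  case False
  then have "F \<subseteq> {..<n}" using assms by (auto simp: less_Suc_eq)
  then show ?thesis using that(1) by blast
qed

context proper_seq_along
begin

text \<open>The invariant of the construction of the blocks \<open>K\<^sub>0 < K\<^sub>1 < \<dots>\<close>, where
  \<open>b\<^sub>i = a\<^bsub>K\<^sub>i\<^esub>\<close>: for disjoint \<open>F\<close>, \<open>G\<close>, neither \<open>b\<^sub>G\<close> nor the limit of \<open>b\<^sub>G + a\<^sub>K\<close> is the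
  limit of \<open>b\<^sub>F + a\<^sub>K\<close>.\<close>

definition separated :: "nat \<Rightarrow> (nat \<Rightarrow> nat set) \<Rightarrow> bool" where
  "separated n Ks \<longleftrightarrow>
    (\<forall>F G. F \<subseteq> {..<n} \<longrightarrow> G \<subseteq> {..<n} \<longrightarrow> F \<inter> G = {} \<longrightarrow> G \<noteq> {} \<longrightarrow>
       \<not> tends (opt_fsum (fsum a \<circ> Ks) F) (fsum (fsum a \<circ> Ks) G)) \<and>
    (\<forall>F G. F \<subseteq> {..<n} \<longrightarrow> G \<subseteq> {..<n} \<longrightarrow> F \<inter> G = {} \<longrightarrow>
       (\<forall>c. \<not> (tends (opt_fsum (fsum a \<circ> Ks) F) c \<and> tends (opt_fsum (fsum a \<circ> Ks) G) c)))"

definition good_block :: "(nat \<Rightarrow> nat set) \<Rightarrow> nat set \<Rightarrow> nat set \<Rightarrow> nat set \<Rightarrow> bool" where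
  "good_block Ks F G K \<longleftrightarrow>
     (G \<noteq> {} \<longrightarrow>
        prefix_add (opt_fsum (fsum a \<circ> Ks) F) (fsum a K) \<noteq> fsum (fsum a \<circ> Ks) G \<and>
        \<not> tends (Some (prefix_add (opt_fsum (fsum a \<circ> Ks) F) (fsum a K))) (fsum (fsum a \<circ> Ks) G)) \<and>
     \<not> tends (opt_fsum (fsum a \<circ> Ks) F) (prefix_add (opt_fsum (fsum a \<circ> Ks) G) (fsum a K)) \<and>
     (\<forall>c. \<not> (tends (Some (prefix_add (opt_fsum (fsum a \<circ> Ks) F) (fsum a K))) c \<and>
             tends (opt_fsum (fsum a \<circ> Ks) G) c))"

lemma separated_0: "separated 0 Ks"
  unfolding separated_def opt_fsum_def using not_tends_None by auto

lemma almost_good_block: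
  assumes sep: "separated n Ks" and "F \<subseteq> {..<n}" "G \<subseteq> {..<n}" "F \<inter> G = {}"
  shows "almost (good_block Ks F G)"
proof -
  let ?z = "opt_fsum (fsum a \<circ> Ks)"
  have disj: "\<forall>c. \<not> (tends (?z F) c \<and> tends (?z G) c)" using sep assms unfolding separated_def by blast
  have new: "almost (\<lambda>K. G \<noteq> {} \<longrightarrow> prefix_add (?z F) (fsum a K) \<noteq> fsum (fsum a \<circ> Ks) G \<and>
     \<not> tends (Some (prefix_add (?z F) (fsum a K))) (fsum (fsum a \<circ> Ks) G))"
  proof (cases "G = {}")
    case True
    then show ?thesis using almost_True by simp
  next
    case False
    then have "\<not> tends (?z F) (fsum (fsum a \<circ> Ks) G)" using sep assms unfolding separated_def by blast
    from almost_conj[OF almost_not[OF this[unfolded tends_def]] almost_not_tends_Some[OF this]]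
    show ?thesis by (rule almost_mono) simp
  qed
  show ?thesis
    unfolding good_block_def
    using almost_conj[OF new almost_conj[OF almost_not_tends_shifted[OF disj]
          almost_no_common_limit_Some[OF disj]]] .
qed

lemma almost_good_blocks:
  assumes "separated n Ks"
  shows "almost (\<lambda>K. \<forall>F\<in>Pow {..<n}. \<forall>G\<in>Pow {..<n}. F \<inter> G = {} \<longrightarrow> good_block Ks F G K)"
proof (intro almost_ball finite_Pow_iff[THEN iffD2] finite_lessThan)
  fix F G assume "F \<in> Pow {..<n}" "G \<in> Pow {..<n}"
  then show "almost (\<lambda>K. F \<inter> G = {} \<longrightarrow> good_block Ks F G K)"
    using almost_good_block[OF assms] almost_True by (cases "F \<inter> G = {}") auto
qed

lemma separated_step:
  assumes sep: "separated n Ks"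
    and good: "\<And>F G. F \<subseteq> {..<n} \<Longrightarrow> G \<subseteq> {..<n} \<Longrightarrow> F \<inter> G = {} \<Longrightarrow> good_block Ks F G K"
  shows "separated (Suc n) (Ks(n := K))"
proof -
  let ?b = "fsum a \<circ> Ks" and ?b' = "fsum a \<circ> Ks(n := K)"
  have agree: "\<And>i. i < n \<Longrightarrow> ?b' i = ?b i" by simp
  have below: "opt_fsum ?b' F = opt_fsum ?b F" "fsum ?b' F = fsum ?b F" if "F \<subseteq> {..<n}" for F
    using opt_fsum_cong_lessThan[where b' = ?b' and b = ?b, OF that agree]
      fsum_cong_lessThan[where b' = ?b' and b = ?b, OF that agree] by auto
  have ins: "opt_fsum ?b' (insert n F) = Some (prefix_add (opt_fsum ?b F) (fsum a K))"
    "fsum ?b' (insert n F) = prefix_add (opt_fsum ?b F) (fsum a K)" if "F \<subseteq> {..<n}" for F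
    using opt_fsum_insert_max[OF that, of ?b'] fsum_insert_max[OF that, of ?b'] below[OF that] by auto
  show ?thesis
    unfolding separated_def
  proof (intro conjI allI impI)
    fix F G assume F: "F \<subseteq> {..<Suc n}" and G: "G \<subseteq> {..<Suc n}" and FG: "F \<inter> G = {}"
    {
      assume "G \<noteq> {}"
      show "\<not> tends (opt_fsum ?b' F) (fsum ?b' G)"
      proof (cases rule: subset_lessThan_Suc_cases[OF F])
        case F1: 1
        show ?thesis
        proof (cases rule: subset_lessThan_Suc_cases[OF G])
          case 1
          then show ?thesis using sep F1 FG \<open>G \<noteq> {}\<close> below unfolding separated_def by auto
        next
          case (2 G')
          then show ?thesis using good[OF F1 2(1)] FG ins below F1 unfolding good_block_def by auto
        qed
      next
        case (2 F')
        then have "G \<subseteq> {..<n}" using G FG by (auto simp: less_Suc_eq)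
        then show ?thesis
          using good[OF 2(1)] 2 FG \<open>G \<noteq> {}\<close> ins below unfolding good_block_def by auto
      qed
    }
    show "\<not> (tends (opt_fsum ?b' F) c \<and> tends (opt_fsum ?b' G) c)" for c
    proof (cases rule: subset_lessThan_Suc_cases[OF F])
      case F1: 1
      show ?thesis
      proof (cases rule: subset_lessThan_Suc_cases[OF G])
        case 1
        then show ?thesis using sep F1 FG below unfolding separated_def by auto
      next
        case (2 G')
        then have "G' \<inter> F = {}" using FG by blast
        then show ?thesis using good[OF 2(1) F1] 2 ins below F1 unfolding good_block_def by auto
      qed
    next
      case (2 F')
      then have "G \<subseteq> {..<n}" using G FG by (auto simp: less_Suc_eq)
      then show ?thesis using good[OF 2(1)] 2 FG ins below unfolding good_block_def by auto
    qed
  qed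
qed

end

context proper_seq_along
begin

lemma good_block_cong_lessThan:
  assumes "\<And>i. i < n \<Longrightarrow> Ks' i = Ks i" "F \<subseteq> {..<n}" "G \<subseteq> {..<n}"
  shows "good_block Ks' F G K \<longleftrightarrow> good_block Ks F G K"
proof -
  have agree: "\<And>i. i < n \<Longrightarrow> (fsum a \<circ> Ks') i = (fsum a \<circ> Ks) i" using assms(1) by simp
  have "opt_fsum (fsum a \<circ> Ks') F = opt_fsum (fsum a \<circ> Ks) F"
    "opt_fsum (fsum a \<circ> Ks') G = opt_fsum (fsum a \<circ> Ks) G"
    "fsum (fsum a \<circ> Ks') G = fsum (fsum a \<circ> Ks) G"
    using opt_fsum_cong_lessThan[where b' = "fsum a \<circ> Ks'" and b = "fsum a \<circ> Ks"] 
      fsum_cong_lessThan[where b' = "fsum a \<circ> Ks'" and b = "fsum a \<circ> Ks"] agree assms(2,3)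
    by blast+
  then show ?thesis unfolding good_block_def by simp
qed

lemma exists_separating_blocks:
  "\<exists>Ks. \<forall>n. finite (Ks n) \<and> Ks n \<noteq> {} \<and> (\<forall>i<n. set_less (Ks i) (Ks n)) \<and>
          (\<forall>F G. F \<subseteq> {..<n} \<longrightarrow> G \<subseteq> {..<n} \<longrightarrow> F \<inter> G = {} \<longrightarrow> G \<noteq> {} \<longrightarrow>
             prefix_add (opt_fsum (fsum a \<circ> Ks) F) (fsum a (Ks n)) \<noteq> fsum (fsum a \<circ> Ks) G)"
proof -
  define P where "P n Ks \<longleftrightarrow> separated n Ks \<and> (\<forall>i<n. finite (Ks i))" for n Ks
  define Q where "Q n Ks Ks' \<longleftrightarrow> (\<exists>K. Ks' = Ks(n := K) \<and> finite K \<and> K \<noteq> {} \<and>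
      (\<forall>i<n. set_less (Ks i) K) \<and>
      (\<forall>F G. F \<subseteq> {..<n} \<longrightarrow> G \<subseteq> {..<n} \<longrightarrow> F \<inter> G = {} \<longrightarrow> good_block Ks F G K))"
    for n Ks Ks'
  have step: "\<exists>Ks'. P (Suc n) Ks' \<and> Q n Ks Ks'" if "P n Ks" for n Ks
  proof -
    have sep: "separated n Ks" and fin: "\<And>i. i < n \<Longrightarrow> finite (Ks i)"
      using that unfolding P_def by auto
    obtain K where K: "K \<in> above (Max (\<Union>i<n. Ks i))"
      and good: "\<forall>F\<in>Pow {..<n}. \<forall>G\<in>Pow {..<n}. F \<inter> G = {} \<longrightarrow> good_block Ks F G K"
      using almost_exists[OF almost_conj[OF almost_above almost_good_blocks[OF sep]]] by blast
    have less: "set_less (Ks i) K" if "i < n" for i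
      unfolding set_less_def
    proof (intro ballI)
      fix x y assume "x \<in> Ks i" "y \<in> K"
      then have "x \<le> Max (\<Union>i<n. Ks i)" using that fin by (intro Max_ge) auto
      also have "\<dots> < y" using K \<open>y \<in> K\<close> unfolding above_def by blast
      finally show "x < y" .
    qed
    have KF: "finite K" "K \<noteq> {}" using K unfolding above_def by auto
    have good': "good_block Ks F G K" if "F \<subseteq> {..<n}" "G \<subseteq> {..<n}" "F \<inter> G = {}" for F G
      using good that by blast
    have "separated (Suc n) (Ks(n := K))" by (rule separated_step[OF sep good'])
    moreover have "finite ((Ks(n := K)) i)" if "i < Suc n" for i
      using fin KF that by (cases "i = n") auto
    ultimately have "P (Suc n) (Ks(n := K))" unfolding P_def by blast
    moreover have "Q n Ks (Ks(n := K))" unfolding Q_def using KF less good' by blast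
    ultimately show ?thesis by blast
  qed
  have "\<exists>Ks. P 0 Ks" unfolding P_def using separated_0 by simp
  from dependent_nat_choice[of P Q, OF this step]
  obtain f where f: "\<And>n. P n (f n)" "\<And>n. Q n (f n) (f (Suc n))" by blast
  define Ks where "Ks i = f (Suc i) i" for i
  have agree: "f m i = Ks i" if "i < m" for m i
    using that
  proof (induction m)
    case (Suc m)
    obtain K where "f (Suc m) = (f m)(m := K)" using f(2)[of m] unfolding Q_def by blast
    then show ?case using Suc unfolding Ks_def by (cases "i = m") auto
  qed simp
  have "finite (Ks n) \<and> Ks n \<noteq> {} \<and> (\<forall>i<n. set_less (Ks i) (Ks n)) \<and>
        (\<forall>F G. F \<subseteq> {..<n} \<longrightarrow> G \<subseteq> {..<n} \<longrightarrow> F \<inter> G = {} \<longrightarrow> G \<noteq> {} \<longrightarrow>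
           prefix_add (opt_fsum (fsum a \<circ> Ks) F) (fsum a (Ks n)) \<noteq> fsum (fsum a \<circ> Ks) G)" for n
  proof -
    obtain K where K: "f (Suc n) = (f n)(n := K)" "finite K" "K \<noteq> {}" "\<forall>i<n. set_less (f n i) K"
      and good: "\<forall>F G. F \<subseteq> {..<n} \<longrightarrow> G \<subseteq> {..<n} \<longrightarrow> F \<inter> G = {} \<longrightarrow> good_block (f n) F G K"
      using f(2)[of n] unfolding Q_def by blast
    have "Ks n = K" unfolding Ks_def K(1) by simp
    moreover have below: "Ks i = f n i" if "i < n" for i using agree[OF that] by simp
    moreover have "prefix_add (opt_fsum (fsum a \<circ> Ks) F) (fsum a K) \<noteq> fsum (fsum a \<circ> Ks) G"
      if "F \<subseteq> {..<n}" "G \<subseteq> {..<n}" "F \<inter> G = {}" "G \<noteq> {}" for F G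
    proof -
      have "good_block (f n) F G K" using good that(1-3) by blast
      then have "good_block Ks F G K" using good_block_cong_lessThan[OF below that(1,2)] by simp
      then show ?thesis using that(4) by (simp add: good_block_def)
    qed
    ultimately show ?thesis using K(2-4) by simp
  qed
  then show ?thesis by blast
qed

end

theorem proposition5p2:
  fixes a :: "nat \<Rightarrow> 'a::semigroup_add"
  assumes "proper_seq a"
  shows "\<exists>b. sumsequence a b \<and>
           (\<forall>F G. finite F \<and> F \<noteq> {} \<and> finite G \<and> G \<noteq> {} \<and> F \<inter> G = {}
              \<longrightarrow> fsum b F \<noteq> fsum b G)"
proof -
  obtain e where "ultrafilter e" "tail_filter \<subseteq> e" "uf_sum e e = e"
    using idempotent_ultrafilter_exists by blast
  then interpret proper_seq_along e a
    using assms by unfold_locales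
  obtain Ks where Ks: "\<forall>n. finite (Ks n) \<and> Ks n \<noteq> {} \<and> (\<forall>i<n. set_less (Ks i) (Ks n)) \<and>
          (\<forall>F G. F \<subseteq> {..<n} \<longrightarrow> G \<subseteq> {..<n} \<longrightarrow> F \<inter> G = {} \<longrightarrow> G \<noteq> {} \<longrightarrow>
             prefix_add (opt_fsum (fsum a \<circ> Ks) F) (fsum a (Ks n)) \<noteq> fsum (fsum a \<circ> Ks) G)"
    using exists_separating_blocks by blast
  have new: "prefix_add (opt_fsum (fsum a \<circ> Ks) F) ((fsum a \<circ> Ks) m) \<noteq> fsum (fsum a \<circ> Ks) G"
    if "F \<subseteq> {..<m}" "G \<subseteq> {..<m}" "F \<inter> G = {}" "G \<noteq> {}" for m F G
    using Ks that by simp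
  have "sumsequence a (fsum a \<circ> Ks)"
    unfolding sumsequence_def using Ks by (intro exI[of _ Ks]) auto
  moreover have "fsum (fsum a \<circ> Ks) F \<noteq> fsum (fsum a \<circ> Ks) G"
    if "finite F" "F \<noteq> {}" "finite G" "G \<noteq> {}" "F \<inter> G = {}" for F G
    by (rule fsum_disjoint_neq[OF new that])
  ultimately show ?thesis by blast
qed

end
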